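(* Let $\lambda\in\mathbb{C}$ with $|\lambda|>1$, $f(z,w)=(\lambda z, zw(1+w))$ and $e(z,w)=(\lambda z, zw)$. There is a unique formal power series $\psi\in\mathbb{C}[[z,w]]$ with $\psi(0,0)=0$ such that $\Psi(z,w)=(z,w(1+\psi(z,w)))$ satisfies $\Psi\circ f=e\circ\Psi$; its coefficients of $z^nw$ are $\psi_{n,1}=\lambda^{n(n-1)/2}$, so $\psi$ is not convergent.
   Context: Formal maps are tuples of formal power series; convergence means the series has positive radius of convergence at $0$. *)

theory Defs
  imports "HOL-Analysis.Analysis" "HOL-Computational_Algebra.Formal_Power_Series"
begin

text \<open>Bivariate formal power series in C[[z,w]] are modelled as power series in z
  whose coefficients are power series in w: coeff2 F m k is the coefficient of z^m w^k.
  The ring operations of complex fps fps are exactly those of C[[z,w]].\<close>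

type_synonym fps2 = "complex fps fps"

definition coeff2 :: "fps2 \<Rightarrow> nat \<Rightarrow> nat \<Rightarrow> complex" where
  "coeff2 F m k = fps_nth (fps_nth F m) k"

definition Z2 :: fps2 where "Z2 = fps_X"
definition W2 :: fps2 where "W2 = fps_const fps_X"
definition C2 :: "complex \<Rightarrow> fps2" where "C2 c = fps_const (fps_const c)"

text \<open>Substitution F(G,H) of series G, H without constant term into F:
  the coefficient of z^a w^b only receives contributions from monomials z^m w^k
  with m + k \<le> a + b, so the sum below is the (finite) formal composition.\<close>

definition fps2_compose :: "fps2 \<Rightarrow> fps2 \<Rightarrow> fps2 \<Rightarrow> fps2" where
  "fps2_compose F G H =
     Abs_fps (\<lambda>a. Abs_fps (\<lambda>b.
        \<Sum>m\<le>a+b. \<Sum>k\<le>a+b. coeff2 F m k * coeff2 (G ^ m * H ^ k) a b))"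

definition map2_compose :: "fps2 \<times> fps2 \<Rightarrow> fps2 \<times> fps2 \<Rightarrow> fps2 \<times> fps2" where
  "map2_compose P Q = (fps2_compose (fst P) (fst Q) (snd Q), fps2_compose (snd P) (fst Q) (snd Q))"

definition fps2_convergent :: "fps2 \<Rightarrow> bool" where
  "fps2_convergent F \<longleftrightarrow>
     (\<exists>r>0. (\<lambda>(m,k). norm (coeff2 F m k) * r ^ m * r ^ k) summable_on (UNIV :: (nat \<times> nat) set))"

end

theory Submission
  imports Defs
begin

(* Write Psi = (z, w u) with u = 1 + psi.  The first components of Psi o f and e o Psi
   both equal lam z, so the conjugacy equation only concerns the second components,
   w u o f = z w u.  Since f = (lam z, z w (1+w)), substituting f into a series only rescales
   powers of z and replaces w^k by (w (1+w))^k, and comparing the coefficients of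
   z^(A+1) w^(B+1) turns the equation into the recurrence
       u(A,B) = sum_{j <= A} lam^(A-j) u(A-j,j) [w^(B+1)] (w (1+w))^(j+1).
   For B = 0 and A > 0 it reads u(A,0) = lam^A u(A,0), so u(A,0) = 0 as lam is not a root of
   unity; afterwards it expresses row A through the rows A' < A.  Hence the recurrence has
   exactly one solution with psi(0,0) = 0, given explicitly by the function psi_coeff.  On the
   coefficients of z^n w only j = 1 contributes, so psi(n,1) = lam^(n-1) psi(n-1,1) =
   lam^(n(n-1)/2), and since |lam| > 1 these grow faster than any geometric sequence. *)

lemma fps2_eqI: "(\<And>a b. coeff2 F a b = coeff2 G a b) \<Longrightarrow> F = G"
  unfolding coeff2_def by (intro fps_ext) auto

lemma coeff2_add [simp]: "coeff2 (F + G) m k = coeff2 F m k + coeff2 G m k"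
  by (simp add: coeff2_def)

lemma coeff2_one [simp]: "coeff2 1 m k = (if m = 0 \<and> k = 0 then 1 else 0)"
  by (simp add: coeff2_def)

lemma coeff2_Z2 [simp]: "coeff2 Z2 m k = (if m = 1 \<and> k = 0 then 1 else 0)"
  by (simp add: coeff2_def Z2_def)

lemma coeff2_W2 [simp]: "coeff2 W2 m k = (if m = 0 \<and> k = 1 then 1 else 0)"
  by (simp add: coeff2_def W2_def)

lemma coeff2_Z2_mult [simp]: "coeff2 (Z2 * F) m k = (if m = 0 then 0 else coeff2 F (m - 1) k)"
  by (simp add: coeff2_def Z2_def)

lemma coeff2_W2_mult [simp]: "coeff2 (W2 * F) m k = (if k = 0 then 0 else coeff2 F m (k - 1))"
  by (simp add: coeff2_def W2_def)

lemma coeff2_C2_mult [simp]: "coeff2 (C2 c * F) m k = c * coeff2 F m k"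
  by (simp add: coeff2_def C2_def)

lemma coeff2_mult_0_0: "coeff2 (F * G) 0 0 = coeff2 F 0 0 * coeff2 G 0 0"
  by (simp add: coeff2_def)

lemma coeff2_Z2_power_mult_const:
  "coeff2 (Z2 ^ n * fps_const p) a b = (if a = n then fps_nth p b else 0)"
  by (simp add: coeff2_def Z2_def fps_X_power_mult_nth)

subsection \<open>Substitution\<close>

lemma coeff2_fps2_compose:
  "coeff2 (fps2_compose F G H) a b =
     (\<Sum>m\<le>a+b. \<Sum>k\<le>a+b. coeff2 F m k * coeff2 (G ^ m * H ^ k) a b)"
  by (simp add: fps2_compose_def coeff2_def)

text \<open>Substituting \<open>(G, H)\<close> into a monomial \<open>c z^m0 w^k0\<close> gives \<open>c G^m0 H^k0\<close>, up to the
  truncation built into the definition of the composition.\<close>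

lemma coeff2_fps2_compose_monomial:
  assumes "\<And>m k. coeff2 F m k = (if m = m0 \<and> k = k0 then c else 0)"
  shows "coeff2 (fps2_compose F G H) a b =
     (if m0 \<le> a+b \<and> k0 \<le> a+b then c * coeff2 (G ^ m0 * H ^ k0) a b else 0)"
proof -
  have "coeff2 F m k * coeff2 (G ^ m * H ^ k) a b
     = (if m = m0 then (if k = k0 then c * coeff2 (G ^ m0 * H ^ k0) a b else 0) else 0)" for m k
    by (simp add: assms)
  then have "coeff2 (fps2_compose F G H) a b = (\<Sum>m\<le>a+b. if m = m0 then
      (\<Sum>k\<le>a+b. if k = k0 then c * coeff2 (G ^ m0 * H ^ k0) a b else 0) else 0)"
    unfolding coeff2_fps2_compose by (intro sum.cong refl) auto
  then show ?thesis by (simp add: sum.delta)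
qed

lemma fps2_compose_C2_mult: "fps2_compose (C2 c * F) G H = C2 c * fps2_compose F G H"
  by (rule fps2_eqI) (simp add: coeff2_fps2_compose sum_distrib_left mult.assoc)

lemma fps2_compose_Z2:
  assumes "coeff2 G 0 0 = 0"
  shows "fps2_compose Z2 G H = G"
proof (rule fps2_eqI)
  fix a b
  show "coeff2 (fps2_compose Z2 G H) a b = coeff2 G a b"
    using assms by (subst coeff2_fps2_compose_monomial[of _ 1 0 1]) (auto simp: Suc_le_eq)
qed

lemma fps2_compose_Z2_W2:
  assumes "coeff2 G 0 0 = 0"
  shows "fps2_compose (Z2 * W2) G H = G * H"
proof (rule fps2_eqI)
  fix a b
  have monomial: "coeff2 (Z2 * W2) m k = (if m = 1 \<and> k = 1 then 1 else 0)" for m k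
    by simp
  show "coeff2 (fps2_compose (Z2 * W2) G H) a b = coeff2 (G * H) a b"
    using assms by (subst coeff2_fps2_compose_monomial[OF monomial])
      (auto simp: Suc_le_eq coeff2_mult_0_0)
qed

text \<open>Substitution into a map of the form \<open>(c z, z p(w))\<close>: the monomial \<open>z^m w^k\<close> becomes
  \<open>c^m z^(m+k) p(w)^k\<close>, so only the monomials with \<open>m + k = a\<close> contribute to \<open>z^a\<close>.\<close>

lemma coeff2_fps2_compose_skew:
  "coeff2 (fps2_compose F (C2 c * Z2) (Z2 * fps_const p)) a b =
     (\<Sum>k\<le>a. coeff2 F (a - k) k * c ^ (a - k) * fps_nth (p ^ k) b)"
proof -
  have "(C2 c * Z2) ^ m * (Z2 * fps_const p) ^ k = C2 (c ^ m) * (Z2 ^ (m + k) * fps_const (p ^ k))"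
    for m k
    by (simp add: C2_def power_mult_distrib power_add fps_const_power algebra_simps)
  then have monomial_image: "coeff2 ((C2 c * Z2) ^ m * (Z2 * fps_const p) ^ k) a b
      = (if k \<le> a \<and> m = a - k then c ^ m * fps_nth (p ^ k) b else 0)" for m k
    by (auto simp: coeff2_Z2_power_mult_const)
  have "coeff2 (fps2_compose F (C2 c * Z2) (Z2 * fps_const p)) a b
     = (\<Sum>k\<le>a+b. if k \<le> a then coeff2 F (a - k) k * (c ^ (a - k) * fps_nth (p ^ k) b) else 0)"
    unfolding coeff2_fps2_compose monomial_image
    by (subst sum.swap) (auto simp: if_distrib sum.delta cong: if_cong intro!: sum.cong)
  also have "\<dots> = (\<Sum>k\<le>a. coeff2 F (a - k) k * c ^ (a - k) * fps_nth (p ^ k) b)"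
  proof -
    have "{..a} = {..a+b} \<inter> {k. k \<le> a}" by auto
    then show ?thesis by (simp add: sum.inter_restrict mult.assoc)
  qed
  finally show ?thesis .
qed

subsection \<open>Reduction of the conjugacy equation to a recurrence\<close>

definition skew_coeff :: "nat \<Rightarrow> nat \<Rightarrow> complex" where
  "skew_coeff k b = fps_nth ((fps_X * (1 + fps_X)) ^ k) b"

lemma fps_nth_one_plus_X_power:
  "fps_nth ((1 + fps_X :: 'a :: comm_semiring_1 fps) ^ k) j = of_nat (k choose j)"
proof -
  have "(1 + fps_X :: 'a fps) ^ k = (\<Sum>i\<le>k. fps_const (of_nat (k choose i)) * fps_X ^ i)"
    by (simp add: add.commute[of 1] binomial_ring fps_of_nat)
  then show ?thesis
    by (simp add: fps_sum_nth if_distrib[of "\<lambda>x. _ * x"] binomial_eq_0 cong: if_cong)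
qed

lemma skew_coeff_eq [simp]: "skew_coeff k b = (if b < k then 0 else of_nat (k choose (b - k)))"
  by (simp add: skew_coeff_def power_mult_distrib fps_X_power_mult_nth fps_nth_one_plus_X_power)

definition conjugacy_recurrence :: "complex \<Rightarrow> fps2 \<Rightarrow> bool" where
  "conjugacy_recurrence lam \<psi> \<longleftrightarrow> (\<forall>A B. coeff2 (1 + \<psi>) A B =
     (\<Sum>j\<le>A. coeff2 (1 + \<psi>) (A - j) j * lam ^ (A - j) * skew_coeff (Suc j) (Suc B)))"

lemma second_component_f: "Z2 * W2 * (1 + W2) = Z2 * fps_const (fps_X * (1 + fps_X))"
  by (simp add: W2_def mult.assoc flip: fps_const_mult fps_const_add)

text \<open>The first components of both sides agree, and the second component of \<open>e \<circ> \<Psi>\<close> is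
  \<open>z\<close> times that of \<open>\<Psi>\<close>.\<close>

lemma conjugacy_iff_second_component:
  "map2_compose (Z2, W2 * u) (C2 lam * Z2, Z2 * W2 * (1 + W2))
     = map2_compose (C2 lam * Z2, Z2 * W2) (Z2, W2 * u)
   \<longleftrightarrow> fps2_compose (W2 * u) (C2 lam * Z2) (Z2 * fps_const (fps_X * (1 + fps_X))) = Z2 * (W2 * u)"
proof -
  have "fps2_compose Z2 (C2 lam * Z2) H = C2 lam * Z2" for H
    by (rule fps2_compose_Z2) simp
  moreover have "fps2_compose (C2 lam * Z2) Z2 H = C2 lam * Z2" for H
    by (simp add: fps2_compose_C2_mult fps2_compose_Z2)
  moreover have "fps2_compose (Z2 * W2) Z2 (W2 * u) = Z2 * (W2 * u)"
    by (simp add: fps2_compose_Z2_W2)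
  ultimately show ?thesis
    by (simp add: map2_compose_def second_component_f)
qed

text \<open>The coefficients of \<open>(w u) \<circ> f\<close>: the factor \<open>w\<close> removes the \<open>k = 0\<close> term of the skew
  substitution formula and shifts the remaining ones.\<close>

lemma coeff2_conjugacy_lhs:
  "coeff2 (fps2_compose (W2 * u) (C2 lam * Z2) (Z2 * fps_const (fps_X * (1 + fps_X)))) a b =
     (if a = 0 then 0
      else \<Sum>j\<le>a - 1. coeff2 u (a - 1 - j) j * lam ^ (a - 1 - j) * skew_coeff (Suc j) b)"
proof (cases a)
  case (Suc A)
  then show ?thesis
    unfolding Suc coeff2_fps2_compose_skew skew_coeff_def[symmetric] sum.atMost_Suc_shift
    by simp
qed (simp add: coeff2_fps2_compose_skew)

text \<open>Coefficients of \<open>z^a w^b\<close> with \<open>a = 0\<close> or \<open>b = 0\<close> vanish on both sides; the remaining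
  ones are exactly the recurrence.\<close>

lemma conjugacy_iff_recurrence:
  "map2_compose (Z2, W2 * (1 + \<psi>)) (C2 lam * Z2, Z2 * W2 * (1 + W2))
     = map2_compose (C2 lam * Z2, Z2 * W2) (Z2, W2 * (1 + \<psi>))
   \<longleftrightarrow> conjugacy_recurrence lam \<psi>"
proof -
  define L where "L a b = coeff2 (fps2_compose (W2 * (1 + \<psi>)) (C2 lam * Z2)
    (Z2 * fps_const (fps_X * (1 + fps_X)))) a b" for a b
  define R where "R a b = coeff2 (Z2 * (W2 * (1 + \<psi>))) a b" for a b
  have trivial: "L a b = R a b" if "a = 0 \<or> b = 0" for a b
    using that by (auto simp: L_def R_def coeff2_conjugacy_lhs)
  have "(\<forall>a b. L a b = R a b) \<longleftrightarrow> (\<forall>A B. L (Suc A) (Suc B) = R (Suc A) (Suc B))"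
    using trivial by (metis not0_implies_Suc)
  also have "\<dots> \<longleftrightarrow> conjugacy_recurrence lam \<psi>"
    unfolding conjugacy_recurrence_def L_def R_def coeff2_conjugacy_lhs
    by (auto simp del: coeff2_add coeff2_one simp add: eq_commute)
  finally show ?thesis
    unfolding conjugacy_iff_second_component L_def R_def using fps2_eqI by metis
qed

subsection \<open>The unique solution of the recurrence\<close>

function psi_coeff :: "complex \<Rightarrow> nat \<Rightarrow> nat \<Rightarrow> complex" where
  "psi_coeff lam A B = (if A = 0 then (if B = 1 then 1 else 0)
     else (\<Sum>j\<in>{1..A}. psi_coeff lam (A - j) j * lam ^ (A - j) * skew_coeff (Suc j) (Suc B)))"
  by auto
termination by (relation "Wellfounded.measure (\<lambda>(lam, A, B). A)") auto

declare psi_coeff.simps [simp del]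

definition psi_series :: "complex \<Rightarrow> fps2" where
  "psi_series lam = Abs_fps (\<lambda>A. Abs_fps (\<lambda>B. psi_coeff lam A B))"

lemma coeff2_psi_series [simp]: "coeff2 (psi_series lam) A B = psi_coeff lam A B"
  by (simp add: psi_series_def coeff2_def)

lemma psi_coeff_column_0: "psi_coeff lam A 0 = 0"
  by (subst psi_coeff.simps) (auto intro!: sum.neutral)

text \<open>The recurrence sums over \<open>j \<le> A\<close>; its \<open>j = 0\<close> term only involves \<open>u(A,0)\<close>.\<close>

lemma sum_atMost_split_0:
  fixes g :: "nat \<Rightarrow> 'a :: comm_monoid_add"
  shows "(\<Sum>j\<le>A. g j) = g 0 + (\<Sum>j\<in>{1..A}. g j)"
proof -
  have "{..A} = insert 0 {1..A}" by auto
  then show ?thesis by simp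
qed

lemma psi_series_solves: "conjugacy_recurrence lam (psi_series lam)"
  unfolding conjugacy_recurrence_def
proof (intro allI)
  fix A B
  show "coeff2 (1 + psi_series lam) A B = (\<Sum>j\<le>A. coeff2 (1 + psi_series lam) (A - j) j *
          lam ^ (A - j) * skew_coeff (Suc j) (Suc B))"
  proof (cases "A = 0")
    case True
    then show ?thesis by (simp add: psi_coeff.simps)
  next
    case False
    have "(\<Sum>j\<le>A. coeff2 (1 + psi_series lam) (A - j) j * lam ^ (A - j) * skew_coeff (Suc j) (Suc B))
        = (\<Sum>j\<in>{1..A}. psi_coeff lam (A - j) j * lam ^ (A - j) * skew_coeff (Suc j) (Suc B))"
      using False by (simp add: sum_atMost_split_0 psi_coeff_column_0)
    also have "\<dots> = psi_coeff lam A B"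
      using False by (subst (2) psi_coeff.simps) simp
    finally show ?thesis
      using False by simp
  qed
qed

lemma recurrence_solution_unique:
  assumes not_root: "\<And>n. n > 0 \<Longrightarrow> lam ^ n \<noteq> 1"
    and rec: "conjugacy_recurrence lam \<psi>" and zero: "coeff2 \<psi> 0 0 = 0"
  shows "coeff2 \<psi> A B = psi_coeff lam A B"
proof (induction A arbitrary: B rule: less_induct)
  case (less A)
  have rec_AB: "coeff2 (1 + \<psi>) A B' = (\<Sum>j\<le>A. coeff2 (1 + \<psi>) (A - j) j * lam ^ (A - j) *
      skew_coeff (Suc j) (Suc B'))" for B'
    using rec unfolding conjugacy_recurrence_def by blast
  show ?case
  proof (cases "A = 0")
    case True
    then show ?thesis
      using rec_AB[of B] zero by (cases B) (auto simp: psi_coeff.simps split: if_splits)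
  next
    case False
    have "coeff2 \<psi> A 0 = coeff2 \<psi> A 0 * lam ^ A"
      using rec_AB[of 0] False by (simp add: sum_atMost_split_0)
    with not_root[of A] False have column_0: "coeff2 \<psi> A 0 = 0"
      by (metis mult.right_neutral mult_left_cancel neq0_conv)
    have "coeff2 \<psi> A B = (\<Sum>j\<in>{1..A}. coeff2 \<psi> (A - j) j * lam ^ (A - j) * skew_coeff (Suc j) (Suc B))"
      using rec_AB[of B] False column_0 by (simp add: sum_atMost_split_0)
    also have "\<dots> = (\<Sum>j\<in>{1..A}. psi_coeff lam (A - j) j * lam ^ (A - j) * skew_coeff (Suc j) (Suc B))"
      using less False by (intro sum.cong refl) auto
    also have "\<dots> = psi_coeff lam A B"
      using False by (subst (2) psi_coeff.simps) simp
    finally show ?thesis .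
  qed
qed

lemma conjugacy_recurrence_iff_psi_series:
  assumes "\<And>n. n > 0 \<Longrightarrow> lam ^ n \<noteq> 1"
  shows "coeff2 \<psi> 0 0 = 0 \<and> conjugacy_recurrence lam \<psi> \<longleftrightarrow> \<psi> = psi_series lam"
  using recurrence_solution_unique[OF assms] psi_series_solves
  by (auto simp: psi_coeff.simps intro: fps2_eqI)

subsection \<open>The coefficients of \<open>z^n w\<close> and divergence\<close>

text \<open>On the row \<open>B = 1\<close> only \<open>j = 1\<close> contributes: \<open>\<psi>(n+1,1) = lam^n \<psi>(n,1)\<close>.\<close>

lemma psi_coeff_row_1: "psi_coeff lam n 1 = lam ^ (n * (n - 1) div 2)"
proof (induction n)
  case 0
  then show ?case by (simp add: psi_coeff.simps)
next
  case (Suc n)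
  have "psi_coeff lam (Suc n) 1
      = (\<Sum>j\<in>{1..Suc n}. psi_coeff lam (Suc n - j) j * lam ^ (Suc n - j) * skew_coeff (Suc j) 2)"
    by (subst psi_coeff.simps) (simp add: numeral_2_eq_2)
  also have "\<dots> = (\<Sum>j\<in>{1..Suc n}. if j = 1 then psi_coeff lam n 1 * lam ^ n else 0)"
    by (intro sum.cong refl) (auto simp: numeral_2_eq_2)
  also have "\<dots> = lam ^ (n * (n - 1) div 2 + n)"
    unfolding Suc.IH by (simp add: power_add)
  also have "n * (n - 1) div 2 + n = Suc n * (Suc n - 1) div 2"
    by (cases n) (simp_all add: algebra_simps)
  finally show ?case .
qed

lemma quadratic_exponent_not_summable:
  fixes q r :: real
  assumes q: "q > 1" and r: "r > 0"
  shows "\<not> summable (\<lambda>n. q ^ (n * (n - 1) div 2) * r ^ n)"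
proof
  assume "summable (\<lambda>n. q ^ (n * (n - 1) div 2) * r ^ n)"
  then have "(\<lambda>n. q ^ (n * (n - 1) div 2) * r ^ n) \<longlonglongrightarrow> 0"
    by (rule summable_LIMSEQ_zero)
  then have "eventually (\<lambda>n. q ^ (n * (n - 1) div 2) * r ^ n < 1) sequentially"
    by (rule order_tendstoD(2)) simp
  then obtain M where small: "\<And>n. n \<ge> M \<Longrightarrow> q ^ (n * (n - 1) div 2) * r ^ n < 1"
    unfolding eventually_sequentially by blast
  obtain N where "1 / r < q ^ N"
    using real_arch_pow[OF q] by blast
  then have qNr: "q ^ N * r \<ge> 1"
    using r by (simp add: field_simps)
  define n where "n = max M (2 * N + 1)"
  have "N * n \<le> n * (n - 1) div 2"
  proof -
    have "2 * N \<le> n - 1" by (simp add: n_def)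
    then have "2 * N * n \<le> (n - 1) * n" by (rule mult_right_mono) simp
    then have "2 * (N * n) \<le> n * (n - 1)" by (simp add: algebra_simps)
    then show ?thesis by linarith
  qed
  then have "q ^ (N * n) \<le> q ^ (n * (n - 1) div 2)"
    using q by (intro power_increasing) auto
  moreover have "1 \<le> (q ^ N * r) ^ n"
    using qNr by (simp add: one_le_power)
  ultimately have "1 \<le> q ^ (n * (n - 1) div 2) * r ^ n"
    using r by (smt (verit) mult_right_mono power_mult power_mult_distrib zero_le_power)
  with small[of n] show False
    unfolding n_def by simp
qed

lemma fps2_convergent_row:
  assumes "fps2_convergent F"
  shows "\<exists>r>0. summable (\<lambda>n. norm (coeff2 F n k) * r ^ n)"
proof -
  obtain r :: real where r: "r > 0"
    and S: "(\<lambda>(m, k). norm (coeff2 F m k) * r ^ m * r ^ k) summable_on UNIV"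
    using assms unfolding fps2_convergent_def by blast
  define g where "g = (\<lambda>(m, k). norm (coeff2 F m k) * r ^ m * r ^ k)"
  have "g summable_on range (\<lambda>n. (n, k))"
    using summable_on_subset_banach[OF S[folded g_def]] by blast
  then have "(g \<circ> (\<lambda>n. (n, k))) summable_on UNIV"
    by (subst (asm) summable_on_reindex) (auto simp: inj_on_def)
  then have "summable (\<lambda>n. r ^ k * (norm (coeff2 F n k) * r ^ n))"
    by (auto simp: g_def o_def algebra_simps dest: summable_on_imp_summable)
  then show ?thesis
    using r by auto
qed

lemma psi_series_not_convergent:
  assumes "norm lam > 1"
  shows "\<not> fps2_convergent (psi_series lam)"
proof
  assume "fps2_convergent (psi_series lam)"
  then obtain r :: real where "r > 0"
    and "summable (\<lambda>n. norm (coeff2 (psi_series lam) n 1) * r ^ n)"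
    using fps2_convergent_row by blast
  then show False
    using quadratic_exponent_not_summable[OF assms]
    unfolding coeff2_psi_series psi_coeff_row_1 norm_power by blast
qed

lemma not_root_of_unity: "norm lam > 1 \<Longrightarrow> n > 0 \<Longrightarrow> lam ^ n \<noteq> (1 :: complex)"
  by (metis less_irrefl norm_one norm_power one_less_power)

theorem mainTheorem14:
  fixes lam :: complex
  assumes "norm lam > 1"
  defines "f \<equiv> (C2 lam * Z2, Z2 * W2 * (1 + W2))"
      and "e \<equiv> (C2 lam * Z2, Z2 * W2)"
  shows "(\<exists>!\<psi> :: fps2. coeff2 \<psi> 0 0 = 0 \<and>
            map2_compose (Z2, W2 * (1 + \<psi>)) f = map2_compose e (Z2, W2 * (1 + \<psi>)))
       \<and> (\<forall>\<psi> :: fps2. coeff2 \<psi> 0 0 = 0 \<and>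
            map2_compose (Z2, W2 * (1 + \<psi>)) f = map2_compose e (Z2, W2 * (1 + \<psi>))
            \<longrightarrow> (\<forall>n. coeff2 \<psi> n 1 = lam ^ (n * (n - 1) div 2)) \<and> \<not> fps2_convergent \<psi>)"
proof -
  have solution_iff: "coeff2 \<psi> 0 0 = 0 \<and>
      map2_compose (Z2, W2 * (1 + \<psi>)) f = map2_compose e (Z2, W2 * (1 + \<psi>))
      \<longleftrightarrow> \<psi> = psi_series lam" for \<psi>
    unfolding f_def e_def conjugacy_iff_recurrence
    using conjugacy_recurrence_iff_psi_series not_root_of_unity[OF assms(1)] by blast
  show ?thesis
    unfolding solution_iff
    using psi_coeff_row_1 psi_series_not_convergent[OF assms(1)] by simp
qed

end
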